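(* Let $P$ be a finite nonempty set of points lying in a single quadrant $Q$ with respect to the origin $s$, and let $e\ne s$ be such that the line $\overline{se}$ is not in the quadrant $Q$. Then, with $d^{\max}=\max_{p\in P} d(p,\overline{se})$, $$d^{\max} \ge \max\Big\{ \min\{d(l_1,\overline{se}),d(l_2,\overline{se})\},\ \min\{d(u_1,\overline{se}),d(l_2,\overline{se})\},\ \text{the third largest of } d(c_1,\overline{se}),\dots,d(c_4,\overline{se})\Big\},$$ and for every $p\in P$, $$d(p,\overline{se}) \le \max_{i\in\{1,2,3,4\}} d(c_i,\overline{se}).$$
   Context: Bounded Quadrant System (BQS) setup. Points are in the plane with UTM-projected $x$ and $y$ axes, and the start point $s$ is taken as the origin. For a point $p\ne s$, $\theta(p)\in[0,2\pi)$ is the angle between the positive $x$ axis and the vector from $s$ to $p$; $\theta_{s,e}=\theta(e)$. The four quadrants are $Q_k=\{p\neq s: (k-1)\pi/2 \le \theta(p) < k\pi/2\}$, $k=1,\dots,4$; quadrant $Q_k$ has angle range $[\theta^Q_{start},\theta^Q_{end}) = [(k-1)\pi/2,k\pi/2)$. A line $\overline{se}$ is "in" quadrant $Q$ if $\theta^Q_{start}\le \theta_{s,e}<\theta^Q_{end}$. For a finite nonempty $P\subset Q$: the bounding box is the smallest closed axis-parallel rectangle containing $P$, with corners $c_1,\dots,c_4$. $\theta_{lb}=\min_{p\in P}\theta(p)$ and $\theta_{ub}=\max_{p\in P}\theta(p)$; the lower (resp. upper) bounding line is the ray from $s$ at angle $\theta_{lb}$ (resp. $\theta_{ub}$). $l_1,l_2$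 are the intersection points of the lower bounding line with the boundary of the bounding box and $u_1,u_2$ those of the upper bounding line, with index 1 the intersection nearer to $s$ (they may coincide). $d(p,\overline{se})$ is the Euclidean distance from the point $p$ to the line segment from $s$ to $e$. *)

theory Defs
  imports "HOL-Analysis.Analysis"
begin

type_synonym pt = "real \<times> real"

text \<open>Angle of the vector from the origin s = (0,0) to p, in [0, 2 pi).\<close>
definition theta :: "pt \<Rightarrow> real" where
  "theta p = Arg2pi (Complex (fst p) (snd p))"

definition in_quadrant :: "nat \<Rightarrow> pt \<Rightarrow> bool" where
  "in_quadrant k p \<longleftrightarrow> p \<noteq> 0 \<and> (real k - 1) * pi / 2 \<le> theta p \<and> theta p < real k * pi / 2"

definition line_in_quadrant :: "nat \<Rightarrow> pt \<Rightarrow> bool" where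
  "line_in_quadrant k e \<longleftrightarrow> (real k - 1) * pi / 2 \<le> theta e \<and> theta e < real k * pi / 2"

definition seg_dist :: "pt \<Rightarrow> pt \<Rightarrow> real" where
  "seg_dist e p = infdist p (closed_segment 0 e)"

definition xmin :: "pt set \<Rightarrow> real" where "xmin P = Min (fst ` P)"
definition xmax :: "pt set \<Rightarrow> real" where "xmax P = Max (fst ` P)"
definition ymin :: "pt set \<Rightarrow> real" where "ymin P = Min (snd ` P)"
definition ymax :: "pt set \<Rightarrow> real" where "ymax P = Max (snd ` P)"

definition bbox :: "pt set \<Rightarrow> pt set" where
  "bbox P = {q. xmin P \<le> fst q \<and> fst q \<le> xmax P \<and> ymin P \<le> snd q \<and> snd q \<le> ymax P}"

definition corners :: "pt set \<Rightarrow> pt list" where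
  "corners P = [(xmin P, ymin P), (xmax P, ymin P), (xmax P, ymax P), (xmin P, ymax P)]"

definition theta_lb :: "pt set \<Rightarrow> real" where "theta_lb P = Min (theta ` P)"
definition theta_ub :: "pt set \<Rightarrow> real" where "theta_ub P = Max (theta ` P)"

definition ray :: "real \<Rightarrow> pt set" where
  "ray a = {t *\<^sub>R (cos a, sin a) | t. t \<ge> 0}"

text \<open>a (index 1) and b (index 2) are the intersection points of the ray at angle th
  with the boundary of the bounding box, a the one nearer to s, b the farther one.\<close>
definition bound_pts :: "real \<Rightarrow> pt set \<Rightarrow> pt \<Rightarrow> pt \<Rightarrow> bool" where
  "bound_pts th P a b \<longleftrightarrow>
     (let S = ray th \<inter> frontier (bbox P) in
        a \<in> S \<and> b \<in> S \<and> (\<forall>q\<in>S. norm a \<le> norm q \<and> norm q \<le> norm b))"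

definition third_largest :: "real list \<Rightarrow> real" where
  "third_largest xs = sort xs ! (length xs - 3)"

end

theory Submission
  imports Defs
begin

text \<open>
  The distance to the segment from \<open>s\<close> to \<open>e\<close> is a convex function vanishing at \<open>s\<close>.
  Convexity bounds it on the bounding box by its values at the corners, and along a ray from \<open>s\<close>
  it grows, so \<open>l1\<close> and \<open>u1\<close> are dominated by the points of \<open>P\<close> of extreme angle.
  Since \<open>e\<close> lies outside the open quadrant containing \<open>P\<close>, the distance also grows as one
  moves away from either axis within that quadrant. Hence the corner combining the far abscissa
  with the near ordinate is dominated by the point of \<open>P\<close> attaining the far abscissa, and
  symmetrically. These two corners are distinct, so one of them carries a value at least the
  third largest of the four.
\<close>

lemma convex_on_infdist:
  fixes S :: "'a::{real_normed_vector,heine_borel} set"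
  assumes "convex S" "closed S" "S \<noteq> {}"
  shows "convex_on UNIV (\<lambda>x. infdist x S)"
proof (rule convex_onI)
  fix t :: real and x y :: 'a
  assume t: "0 < t" "t < 1"
  obtain cx where cx: "cx \<in> S" "infdist x S = dist x cx"
    using infdist_attains_inf[OF assms(2,3)] by blast
  obtain cy where cy: "cy \<in> S" "infdist y S = dist y cy"
    using infdist_attains_inf[OF assms(2,3)] by blast
  have "(1 - t) *\<^sub>R cx + t *\<^sub>R cy \<in> S"
    using assms(1) cx(1) cy(1) t unfolding convex_alt by simp
  then have "infdist ((1 - t) *\<^sub>R x + t *\<^sub>R y) S
      \<le> norm ((1 - t) *\<^sub>R (x - cx) + t *\<^sub>R (y - cy))"
    by (rule infdist_le2) (simp add: dist_norm algebra_simps)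
  also have "\<dots> \<le> (1 - t) * dist x cx + t * dist y cy"
    using t by (metis norm_triangle_le norm_scaleR abs_of_pos diff_gt_0_iff_gt dist_norm order_refl)
  finally show "infdist ((1 - t) *\<^sub>R x + t *\<^sub>R y) S \<le> (1 - t) * infdist x S + t * infdist y S"
    using cx cy by simp
qed auto

lemma seg_dist_convex: "convex_on UNIV (seg_dist e)"
  unfolding seg_dist_def[abs_def] by (rule convex_on_infdist) auto

lemma seg_dist_0 [simp]: "seg_dist e 0 = 0"
  by (simp add: seg_dist_def)

lemma seg_dist_nonneg: "0 \<le> seg_dist e p"
  by (simp add: seg_dist_def infdist_nonneg)

lemma seg_dist_le_on_segment:
  assumes "q \<in> closed_segment 0 p"
  shows "seg_dist e q \<le> seg_dist e p"
proof -
  obtain u where u: "0 \<le> u" "u \<le> 1" "q = (1 - u) *\<^sub>R 0 + u *\<^sub>R p"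
    using assms by (auto simp: closed_segment_def)
  then have "seg_dist e q \<le> (1 - u) * seg_dist e 0 + u * seg_dist e p"
    using convex_onD[OF seg_dist_convex] by blast
  also have "\<dots> \<le> seg_dist e p"
    using u seg_dist_nonneg[of e p] by (simp add: mult_left_le_one_le)
  finally show ?thesis .
qed

lemma convex_on_closed_segment_le_max:
  assumes "convex_on UNIV f" "x \<in> closed_segment a b"
  shows "f x \<le> max (f a) (f b)"
  using convex_on_convex_hull_bound[of "{a, b}" f "max (f a) (f b)"]
    convex_on_subset[OF assms(1)] assms(2) by (simp add: segment_convex_hull)

lemma convex_on_rectangle_le_max:
  fixes f :: "real \<times> real \<Rightarrow> real"
  assumes f: "convex_on UNIV f" and "x0 \<le> x" "x \<le> x1" "y0 \<le> y" "y \<le> y1"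
  shows "f (x, y) \<le> max (max (f (x0, y0)) (f (x1, y0))) (max (f (x1, y1)) (f (x0, y1)))"
proof -
  have horizontal: "f (x, y') \<le> max (f (x0, y')) (f (x1, y'))" for y'
    using assms by (intro convex_on_closed_segment_le_max[OF f])
      (simp add: closed_segment_same_snd closed_segment_eq_real_ivl)
  have "f (x, y) \<le> max (f (x, y0)) (f (x, y1))"
    using assms by (intro convex_on_closed_segment_le_max[OF f])
      (simp add: closed_segment_same_fst closed_segment_eq_real_ivl)
  then show ?thesis
    using horizontal[of y0] horizontal[of y1] by linarith
qed

lemma infdist_isometric_image:
  assumes "\<And>x y. dist (g x) (g y) = dist x y"
  shows "infdist (g x) (g ` S) = infdist x S"
  unfolding infdist_def by (simp add: image_comp o_def assms)

lemma seg_dist_linear_isometry: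
  assumes "linear g" "\<And>x. norm (g x) = norm x"
  shows "seg_dist (g e) (g p) = seg_dist e p"
proof -
  have "closed_segment 0 (g e) = g ` closed_segment 0 e"
    using closed_segment_linear_image[OF assms(1), of 0 e] linear_0[OF assms(1)] by simp
  moreover have "dist (g x) (g y) = dist x y" for x y
    using assms linear_diff[OF assms(1)] by (metis dist_norm)
  ultimately show ?thesis
    unfolding seg_dist_def by (simp add: infdist_isometric_image)
qed

lemma seg_dist_mono_fst:
  assumes e: "\<not> (0 < fst e \<and> 0 < snd e)" and "0 \<le> a" "a \<le> a'" "0 \<le> b"
  shows "seg_dist e (a, b) \<le> seg_dist e (a', b)"
proof -
  have on_seg: "m *\<^sub>R e \<in> closed_segment 0 e" if "0 \<le> m" "m \<le> 1" for m
    using that by (auto simp: closed_segment_def)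
  obtain q where "q \<in> closed_segment 0 e" "seg_dist e (a', b) = dist (a', b) q"
    using infdist_attains_inf[OF closed_segment, of 0 e "(a', b)"] by (auto simp: seg_dist_def)
  then obtain l where l: "0 \<le> l" "l \<le> 1" and near: "seg_dist e (a', b) = dist (a', b) (l *\<^sub>R e)"
    by (auto simp: closed_segment_def)
  obtain ex ey where e_def [simp]: "e = (ex, ey)" by (cases e)
  show ?thesis
  proof (cases "l * ex \<le> a")
    case True
    \<comment> \<open>the nearest point to \<open>(a', b)\<close> is at least as near to \<open>(a, b)\<close>\<close>
    have "seg_dist e (a, b) \<le> dist (a, b) (l *\<^sub>R e)"
      unfolding seg_dist_def using on_seg[OF l] by (rule infdist_le)
    also have "\<dots> \<le> dist (a', b) (l *\<^sub>R e)"
      using True \<open>a \<le> a'\<close> by (simp add: dist_Pair_Pair dist_real_def power_mono)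
    finally show ?thesis using near by simp
  next
    case False
    then have "0 < l * ex"
      using \<open>0 \<le> a\<close> by linarith
    then have "0 < ex"
      using \<open>0 \<le> l\<close> by (simp add: zero_less_mult_iff)
    then have "ey \<le> 0" using e by auto
    \<comment> \<open>project horizontally onto the segment instead: the point with abscissa \<open>a\<close>\<close>
    define m where "m = a / ex"
    have m: "0 \<le> m" "m \<le> l" "m * ex = a"
      using False \<open>0 < ex\<close> \<open>0 \<le> a\<close> by (auto simp: m_def field_simps)
    have "seg_dist e (a, b) \<le> dist (a, b) (m *\<^sub>R e)"
      unfolding seg_dist_def using m l by (intro infdist_le on_seg) auto
    also have "\<dots> = b - m * ey"
      using m \<open>0 \<le> b\<close> mult_nonneg_nonpos[OF \<open>0 \<le> m\<close> \<open>ey \<le> 0\<close>]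
      by (simp add: dist_Pair_Pair dist_real_def)
    also have "\<dots> \<le> dist b (l * ey)"
      using mult_right_mono_neg[OF \<open>m \<le> l\<close> \<open>ey \<le> 0\<close>] by (simp add: dist_real_def)
    also have "\<dots> \<le> dist (a', b) (l *\<^sub>R e)"
      using dist_snd_le[of "(a', b)" "l *\<^sub>R e"] by simp
    finally show ?thesis using near by simp
  qed
qed

lemma seg_dist_mono_snd:
  assumes "\<not> (0 < fst e \<and> 0 < snd e)" and "0 \<le> b" "b \<le> b'" "0 \<le> a"
  shows "seg_dist e (a, b) \<le> seg_dist e (a, b')"
proof -
  have swap: "seg_dist (prod.swap e) (prod.swap p) = seg_dist e p" for p
    by (rule seg_dist_linear_isometry) (auto simp: linear_iff norm_Pair add.commute)
  have "seg_dist (prod.swap e) (b, a) \<le> seg_dist (prod.swap e) (b', a)"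
    using assms by (intro seg_dist_mono_fst) auto
  then show ?thesis
    using swap[of "(a, b)"] swap[of "(a, b')"] by simp
qed

lemma seg_dist_mono_quadrant:
  assumes "\<bar>sx\<bar> = 1" "\<bar>sy\<bar> = 1" and e: "\<not> (0 < sx * fst e \<and> 0 < sy * snd e)"
    and "0 \<le> sx * a" "sx * a \<le> sx * a'" "0 \<le> sy * b" "sy * b \<le> sy * b'"
  shows "seg_dist e (a, b) \<le> seg_dist e (a', b')"
proof -
  define g where "g p = (sx * fst p, sy * snd p)" for p :: pt
  have reflect: "seg_dist (g e) (g p) = seg_dist e p" for p
    by (rule seg_dist_linear_isometry)
      (auto simp: g_def linear_iff norm_Pair algebra_simps abs_mult power_mult_distrib
        abs_eq_iff[of sx 1] abs_eq_iff[of sy 1] assms(1,2))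
  have "seg_dist e (a, b) = seg_dist (g e) (sx * a, sy * b)"
    using reflect[of "(a, b)"] by (simp add: g_def)
  also have "\<dots> \<le> seg_dist (g e) (sx * a', sy * b)"
    using assms by (intro seg_dist_mono_fst) (auto simp: g_def)
  also have "\<dots> \<le> seg_dist (g e) (sx * a', sy * b')"
    using assms by (intro seg_dist_mono_snd) (auto simp: g_def)
  also have "\<dots> = seg_dist e (a', b')"
    using reflect[of "(a', b')"] by (simp add: g_def)
  finally show ?thesis .
qed

lemma polar_theta: "p = norm p *\<^sub>R (cos (theta p), sin (theta p))"
  using cos_Arg2pi[of "Complex (fst p) (snd p)"] sin_Arg2pi[of "Complex (fst p) (snd p)"]
  by (simp add: theta_def prod_eq_iff cmod_def norm_prod_def power2_eq_square)

lemma in_quadrant_signs: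
  assumes "in_quadrant k p"
  shows "(k = 1 \<longrightarrow> 0 < fst p \<and> 0 \<le> snd p) \<and> (k = 2 \<longrightarrow> fst p \<le> 0 \<and> 0 < snd p) \<and>
    (k = 3 \<longrightarrow> fst p < 0 \<and> snd p \<le> 0) \<and> (k = 4 \<longrightarrow> 0 \<le> fst p \<and> snd p < 0)"
proof -
  let ?t = "theta p" and ?n = "norm p"
  have t: "(real k - 1) * pi / 2 \<le> ?t" "?t < real k * pi / 2" and "0 < ?n"
    using assms by (auto simp: in_quadrant_def)
  then have sign: "0 < ?n * c \<longleftrightarrow> 0 < c" "0 \<le> ?n * c \<longleftrightarrow> 0 \<le> c"
      "?n * c < 0 \<longleftrightarrow> c < 0" "?n * c \<le> 0 \<longleftrightarrow> c \<le> 0" for c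
    by (simp_all add: zero_less_mult_iff zero_le_mult_iff mult_less_0_iff mult_le_0_iff)
  have xy: "fst p = ?n * cos ?t" "snd p = ?n * sin ?t"
    by (subst (1) polar_theta, simp)+
  have "k = 1 \<Longrightarrow> 0 < cos ?t \<and> 0 \<le> sin ?t"
    using t by (auto intro!: cos_gt_zero_pi sin_ge_zero)
  moreover have "k = 2 \<Longrightarrow> cos ?t \<le> 0 \<and> 0 < sin ?t"
    using t cos_ge_zero[of "pi - ?t"] by (auto intro!: sin_gt_zero)
  moreover have "k = 3 \<Longrightarrow> cos ?t < 0 \<and> sin ?t \<le> 0"
    using t cos_gt_zero_pi[of "?t - pi"] sin_ge_zero[of "?t - pi"] by (auto simp: cos_diff sin_diff)
  moreover have "k = 4 \<Longrightarrow> 0 \<le> cos ?t \<and> sin ?t < 0"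
    using t cos_ge_zero[of "2 * pi - ?t"] sin_gt_zero[of "2 * pi - ?t"] by (auto simp: cos_diff sin_diff)
  ultimately show ?thesis
    unfolding xy sign by blast
qed

lemma in_some_quadrant:
  assumes "p \<noteq> 0"
  obtains j where "j \<in> {1..4}" "in_quadrant j p"
proof -
  have "0 \<le> theta p" "theta p < 2 * pi"
    using Arg2pi by (auto simp: theta_def)
  then consider "theta p < pi / 2" | "pi / 2 \<le> theta p" "theta p < pi"
    | "pi \<le> theta p" "theta p < 3 * pi / 2" | "3 * pi / 2 \<le> theta p"
    by linarith
  then show thesis
    using assms that[of 1] that[of 2] that[of 3] that[of 4] \<open>0 \<le> theta p\<close> \<open>theta p < 2 * pi\<close>
    by cases (simp_all add: in_quadrant_def)
qed

lemma quadrant_signs: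
  assumes "k \<in> {1..4}"
  obtains sx sy :: real where "\<bar>sx\<bar> = 1" "\<bar>sy\<bar> = 1"
    and "\<And>p. in_quadrant k p \<Longrightarrow> 0 \<le> sx * fst p \<and> 0 \<le> sy * snd p"
    and "(\<forall>p. in_quadrant k p \<longrightarrow> 0 < sx * fst p) \<or> (\<forall>p. in_quadrant k p \<longrightarrow> 0 < sy * snd p)"
    and "\<And>q. 0 < sx * fst q \<Longrightarrow> 0 < sy * snd q \<Longrightarrow> in_quadrant k q"
proof -
  have open_quadrant: "in_quadrant i q"
    if "q \<noteq> 0" "\<And>j. j \<in> {1, 2, 3, 4} \<Longrightarrow> in_quadrant j q \<Longrightarrow> j = i" for i q
  proof -
    have "{1..4} = {1, 2, 3, 4 :: nat}" by auto
    then show ?thesis using in_some_quadrant[OF that(1)] that(2) by metis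
  qed
  consider "k = 1" | "k = 2" | "k = 3" | "k = 4"
    using assms by fastforce
  then show thesis
  proof cases
    case 1
    show thesis
      by (rule that[of 1 1]) (use 1 in \<open>auto dest!: in_quadrant_signs intro!: open_quadrant\<close>)
  next
    case 2
    show thesis
      by (rule that[of "-1" 1]) (use 2 in \<open>auto dest!: in_quadrant_signs intro!: open_quadrant\<close>)
  next
    case 3
    show thesis
      by (rule that[of "-1" "-1"]) (use 3 in \<open>auto dest!: in_quadrant_signs intro!: open_quadrant\<close>)
  next
    case 4
    show thesis
      by (rule that[of 1 "-1"]) (use 4 in \<open>auto dest!: in_quadrant_signs intro!: open_quadrant\<close>)
  qed
qed

lemma ray_eq_norm_scaleR: "q \<in> ray th \<Longrightarrow> q = norm q *\<^sub>R (cos th, sin th)"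
proof -
  assume "q \<in> ray th"
  then obtain t where t: "0 \<le> t" "q = t *\<^sub>R (cos th, sin th)"
    by (auto simp: ray_def)
  have "norm (cos th, sin th) = 1"
    by (simp add: norm_Pair)
  then have "norm q = t"
    unfolding t(2) norm_scaleR using t(1) by simp
  then show ?thesis
    using t(2) by simp
qed

lemma in_ray_theta: "p \<in> ray (theta p)"
  unfolding ray_def using polar_theta[of p] by auto

lemma closed_segment_subset_ray:
  assumes "p \<in> ray th"
  shows "closed_segment 0 p \<subseteq> ray th"
proof
  fix q assume "q \<in> closed_segment 0 p"
  then obtain u where "0 \<le> u" "q = u *\<^sub>R p"
    by (auto simp: closed_segment_def)
  then have "q = (u * norm p) *\<^sub>R (cos th, sin th)"
    using ray_eq_norm_scaleR[OF assms] by (metis scaleR_scaleR)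
  then show "q \<in> ray th"
    using \<open>0 \<le> u\<close> by (auto simp: ray_def)
qed

lemma mem_closed_segment_ray:
  assumes "a \<in> ray th" "p \<in> ray th" "norm a \<le> norm p"
  shows "a \<in> closed_segment 0 p"
proof (cases "p = 0")
  case True
  then show ?thesis using assms(3) by simp
next
  case False
  have "(norm a / norm p) *\<^sub>R p = norm a *\<^sub>R (cos th, sin th)"
    using False by (subst ray_eq_norm_scaleR[OF assms(2)]) simp
  then have "a = (norm a / norm p) *\<^sub>R p"
    using ray_eq_norm_scaleR[OF assms(1)] by simp
  then show ?thesis
    using assms(3) False by (auto simp: closed_segment_def intro!: exI[of _ "norm a / norm p"])
qed

lemma bound_pts_fst_mem_closed_segment:
  assumes "bound_pts th P a b" "0 \<notin> bbox P" "p \<in> bbox P" "p \<in> ray th"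
  shows "a \<in> closed_segment 0 p"
proof -
  have "closed_segment 0 p \<inter> frontier (bbox P) \<noteq> {}"
    using assms(2,3) by (intro connected_Int_frontier) auto
  then obtain q where q: "q \<in> closed_segment 0 p" "q \<in> frontier (bbox P)"
    by blast
  have "q \<in> ray th"
    using q(1) closed_segment_subset_ray[OF assms(4)] by blast
  then have "a \<in> ray th" "norm a \<le> norm q"
    using assms(1) q(2) by (auto simp: bound_pts_def Let_def)
  moreover have "norm q \<le> norm p"
    using q(1) by (auto simp: closed_segment_def mult_left_le_one_le)
  ultimately show ?thesis
    using mem_closed_segment_ray assms(4) by fastforce
qed

lemma mem_bbox_iff:
  "q \<in> bbox P \<longleftrightarrow> xmin P \<le> fst q \<and> fst q \<le> xmax P \<and> ymin P \<le> snd q \<and> snd q \<le> ymax P"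
  by (simp add: bbox_def)

lemma subset_bbox: "finite P \<Longrightarrow> P \<subseteq> bbox P"
  by (auto simp: mem_bbox_iff xmin_def xmax_def ymin_def ymax_def
      intro!: Min_le Max_ge rev_image_eqI)

lemma seg_dist_le_Max_corners:
  assumes "p \<in> bbox P"
  shows "seg_dist e p \<le> Max (seg_dist e ` set (corners P))"
proof -
  obtain x y where p: "p = (x, y)" by (cases p)
  have "seg_dist e p \<le> max (max (seg_dist e (xmin P, ymin P)) (seg_dist e (xmax P, ymin P)))
      (max (seg_dist e (xmax P, ymax P)) (seg_dist e (xmin P, ymax P)))"
    using assms unfolding p mem_bbox_iff by (intro convex_on_rectangle_le_max seg_dist_convex) auto
  also have "\<dots> = Max (seg_dist e ` set (corners P))"
    by (simp add: corners_def max.assoc)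
  finally show ?thesis .
qed

lemma zero_notin_bbox:
  assumes "finite P" "P \<noteq> {}" "\<bar>sx\<bar> = 1" "\<bar>sy\<bar> = 1"
    and "(\<forall>p\<in>P. 0 < sx * fst p) \<or> (\<forall>p\<in>P. 0 < sy * snd p)"
  shows "0 \<notin> bbox P"
proof
  assume "0 \<in> bbox P"
  then have bounds: "xmin P \<le> 0" "0 \<le> xmax P" "ymin P \<le> 0" "0 \<le> ymax P"
    by (auto simp: mem_bbox_iff)
  have "xmin P \<in> fst ` P" "xmax P \<in> fst ` P" "ymin P \<in> snd ` P" "ymax P \<in> snd ` P"
    using assms(1,2) by (simp_all add: xmin_def xmax_def ymin_def ymax_def)
  then have "0 < sx * xmin P \<and> 0 < sx * xmax P \<or> 0 < sy * ymin P \<and> 0 < sy * ymax P"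
    using assms(5) by (simp only: image_iff) metis
  moreover have "sx = 1 \<or> sx = -1" "sy = 1 \<or> sy = -1"
    using assms(3,4) by linarith+
  ultimately show False
    using bounds by (elim disjE; simp)
qed

lemma seg_dist_bound_pts_le:
  assumes "bound_pts (theta p) P a b" "0 \<notin> bbox P" "p \<in> bbox P"
  shows "seg_dist e a \<le> seg_dist e p"
  using bound_pts_fst_mem_closed_segment[OF assms in_ray_theta] by (rule seg_dist_le_on_segment)

lemma third_largest_corners_le_opposite:
  assumes "x = xmin P \<and> x' = xmax P \<or> x = xmax P \<and> x' = xmin P"
    and "y = ymin P \<and> y' = ymax P \<or> y = ymax P \<and> y' = ymin P"
  shows "third_largest (map f (corners P)) \<le> max (f (x, y)) (f (x', y'))"
  using assms by (elim disjE conjE) (simp_all add: corners_def third_largest_def)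

lemma extremes_by_sign:
  fixes A :: "real set"
  assumes "finite A" "A \<noteq> {}" "\<bar>s\<bar> = 1"
  obtains near far where "near = Min A \<and> far = Max A \<or> near = Max A \<and> far = Min A"
    and "near \<in> A" "far \<in> A" "\<And>a. a \<in> A \<Longrightarrow> s * near \<le> s * a \<and> s * a \<le> s * far"
proof (cases "s = 1")
  case True
  then show thesis
    using assms by (intro that[of "Min A" "Max A"]) auto
next
  case False
  then have "s = -1" using assms(3) by (simp add: abs_eq_iff)
  then show thesis
    using assms by (intro that[of "Max A" "Min A"]) auto
qed

lemma third_largest_corners_le:
  assumes "finite P" "P \<noteq> {}" "\<bar>sx\<bar> = 1" "\<bar>sy\<bar> = 1"
    and P: "\<forall>p\<in>P. 0 \<le> sx * fst p \<and> 0 \<le> sy * snd p"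
    and e: "\<not> (0 < sx * fst e \<and> 0 < sy * snd e)"
  shows "third_largest (map (seg_dist e) (corners P)) \<le> Max (seg_dist e ` P)"
proof -
  let ?f = "seg_dist e"
  obtain nx fx where x: "nx = xmin P \<and> fx = xmax P \<or> nx = xmax P \<and> fx = xmin P"
    and "nx \<in> fst ` P" "fx \<in> fst ` P"
    and x_bounds: "\<And>a. a \<in> fst ` P \<Longrightarrow> sx * nx \<le> sx * a \<and> sx * a \<le> sx * fx"
    using extremes_by_sign[of "fst ` P" sx] assms(1-3) unfolding xmin_def xmax_def by auto
  obtain ny fy where y: "ny = ymin P \<and> fy = ymax P \<or> ny = ymax P \<and> fy = ymin P"
    and "ny \<in> snd ` P" "fy \<in> snd ` P"
    and y_bounds: "\<And>b. b \<in> snd ` P \<Longrightarrow> sy * ny \<le> sy * b \<and> sy * b \<le> sy * fy"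
    using extremes_by_sign[of "snd ` P" sy] assms(1,2,4) unfolding ymin_def ymax_def by auto
  obtain p q where "p \<in> P" "fst p = fx" "q \<in> P" "snd q = fy"
    using \<open>fx \<in> fst ` P\<close> \<open>fy \<in> snd ` P\<close> by auto
  have signs: "0 \<le> sx * nx" "0 \<le> sx * fx" "0 \<le> sy * ny" "0 \<le> sy * fy"
    using \<open>nx \<in> fst ` P\<close> \<open>fx \<in> fst ` P\<close> \<open>ny \<in> snd ` P\<close> \<open>fy \<in> snd ` P\<close> P by auto
  have "?f (fx, ny) \<le> ?f (fst p, snd p)"
    using \<open>p \<in> P\<close> \<open>fst p = fx\<close>
    by (intro seg_dist_mono_quadrant[OF assms(3,4) e]) (auto simp: signs y_bounds)
  moreover have "?f (nx, fy) \<le> ?f (fst q, snd q)"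
    using \<open>q \<in> P\<close> \<open>snd q = fy\<close>
    by (intro seg_dist_mono_quadrant[OF assms(3,4) e]) (auto simp: signs x_bounds)
  moreover have "third_largest (map ?f (corners P)) \<le> max (?f (fx, ny)) (?f (nx, fy))"
    using x y by (intro third_largest_corners_le_opposite) auto
  moreover have "?f p \<le> Max (?f ` P)" "?f q \<le> Max (?f ` P)"
    using \<open>p \<in> P\<close> \<open>q \<in> P\<close> assms(1) by simp_all
  ultimately show ?thesis
    unfolding prod.collapse by linarith
qed

theorem theorem5:
  fixes P :: "pt set" and k :: nat and e l1 l2 u1 u2 :: pt
  assumes "k \<in> {1..4}"
    and "finite P" and "P \<noteq> {}"
    and "\<forall>p\<in>P. in_quadrant k p"
    and "e \<noteq> 0" and "\<not> line_in_quadrant k e"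
    and "bound_pts (theta_lb P) P l1 l2"
    and "bound_pts (theta_ub P) P u1 u2"
  shows "(Max (seg_dist e ` P) \<ge>
           max (min (seg_dist e l1) (seg_dist e l2))
             (max (min (seg_dist e u1) (seg_dist e l2))
                  (third_largest (map (seg_dist e) (corners P)))))
         \<and> (\<forall>p\<in>P. seg_dist e p \<le> Max (seg_dist e ` set (corners P)))"
proof -
  obtain sx sy where sx: "\<bar>sx\<bar> = 1" and sy: "\<bar>sy\<bar> = 1"
    and signs: "\<And>p. in_quadrant k p \<Longrightarrow> 0 \<le> sx * fst p \<and> 0 \<le> sy * snd p"
    and strict: "(\<forall>p. in_quadrant k p \<longrightarrow> 0 < sx * fst p) \<or> (\<forall>p. in_quadrant k p \<longrightarrow> 0 < sy * snd p)"
    and open_quadrant: "\<And>q. 0 < sx * fst q \<Longrightarrow> 0 < sy * snd q \<Longrightarrow> in_quadrant k q"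
    using quadrant_signs[OF assms(1)] by blast
  have "\<not> in_quadrant k e"
    using assms(6) by (simp add: in_quadrant_def line_in_quadrant_def)
  then have e: "\<not> (0 < sx * fst e \<and> 0 < sy * snd e)"
    using open_quadrant by blast
  have "0 \<notin> bbox P"
    using zero_notin_bbox[OF assms(2,3) sx sy] strict assms(4) by blast
  have "theta_lb P \<in> theta ` P" "theta_ub P \<in> theta ` P"
    using assms(2,3) by (simp_all add: theta_lb_def theta_ub_def)
  then obtain p0 p1 where "p0 \<in> P" "theta p0 = theta_lb P" "p1 \<in> P" "theta p1 = theta_ub P"
    by (metis imageE)
  then have "seg_dist e l1 \<le> seg_dist e p0" "seg_dist e u1 \<le> seg_dist e p1"
    using seg_dist_bound_pts_le[OF _ \<open>0 \<notin> bbox P\<close>, of p0 l1 l2 e]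
      seg_dist_bound_pts_le[OF _ \<open>0 \<notin> bbox P\<close>, of p1 u1 u2 e] subset_bbox[OF assms(2)] assms(7,8)
    by auto
  moreover have "seg_dist e p0 \<le> Max (seg_dist e ` P)" "seg_dist e p1 \<le> Max (seg_dist e ` P)"
    using \<open>p0 \<in> P\<close> \<open>p1 \<in> P\<close> assms(2) by simp_all
  moreover have "third_largest (map (seg_dist e) (corners P)) \<le> Max (seg_dist e ` P)"
    using third_largest_corners_le[OF assms(2,3) sx sy _ e] signs assms(4) by blast
  moreover have "\<forall>p\<in>P. seg_dist e p \<le> Max (seg_dist e ` set (corners P))"
    using seg_dist_le_Max_corners subset_bbox[OF assms(2)] by blast
  ultimately show ?thesis
    by linarith
qed

end
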